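(* Let $p$ be a prime. For $\gamma\in\mathbb{Z}^+$, $n\in\mathbb{N}$, $r\in\mathbb{Z}$ define $$S_{\gamma}^{(p)}(n,r)=p^{-\lfloor\frac{n-1}{p-1}\rfloor}\sum_{k\equiv r\ (\mathrm{mod}\ p^{\gamma})}\binom{p^{\gamma-1}n}k(-1)^k.$$ Let $\alpha,\beta,n\in\mathbb{N}$ with $\alpha>\beta$ and let $r\in\mathbb{Z}$. Then $$S_{\alpha}^{(p)}(n,p^{\beta}r)\equiv S_{\alpha-\beta}^{(p)}(n,r)\pmod{p^{(2-\delta_{p,2})(\alpha-\beta-1)}},$$ where $\delta_{p,2}=1$ if $p=2$ and $0$ otherwise. If moreover $r\not\equiv0\pmod p$, then $\operatorname{ord}_p\big(S_{\alpha}^{(p)}(n,p^{\beta}r)\big)\geqslant\alpha-\beta-2$.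
   Context: The sum runs over all integers $k\equiv r\pmod{p^\gamma}$ with $\binom Nk=0$ unless $0\le k\le N$; $S_\gamma^{(p)}(n,r)$ is an integer. $\operatorname{ord}_p$ is the $p$-adic order. *)

theory Defs
  imports "HOL-Number_Theory.Number_Theory"
begin

definition S_exp :: "nat \<Rightarrow> nat \<Rightarrow> int" where
  "S_exp p n = (int n - 1) div (int p - 1)"

definition S_sum :: "nat \<Rightarrow> nat \<Rightarrow> nat \<Rightarrow> int \<Rightarrow> int" where
  "S_sum p \<gamma> n r =
     (\<Sum>k | k \<le> p ^ (\<gamma> - 1) * n \<and> [int k = r] (mod (int p ^ \<gamma>)).
        (-1) ^ k * int ((p ^ (\<gamma> - 1) * n) choose k))"

text \<open>S_gamma^(p)(n,r) = p^(-floor((n-1)/(p-1))) * sum; it is an integer, so when the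
  exponent is nonnegative we take the (exact) integer quotient.\<close>
definition S :: "nat \<Rightarrow> nat \<Rightarrow> nat \<Rightarrow> int \<Rightarrow> int" where
  "S p \<gamma> n r =
     (if S_exp p n \<ge> 0 then S_sum p \<gamma> n r div (int p ^ nat (S_exp p n))
      else S_sum p \<gamma> n r * int p ^ nat (- S_exp p n))"

end

theory Submission
  imports Defs "HOL-Computational_Algebra.Polynomial"
begin

(* S_sum p \<gamma> n s is the multisection at s modulo p^\<gamma> of the powers of Y = (1 - x)^(p^(\<gamma>-1)),
   i.e. the sum of the coefficients of Y^n at exponents congruent to s.  Modulo p^\<alpha> and at the
   residue p^\<beta> r, the polynomial Z = (1 - x^(p^\<beta>))^(p^(\<alpha>-\<beta>-1)) yields S_(\<alpha>-\<beta>)(n, r), so the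
   congruence is a statement about Y^n - Z^n.  It is proved in Z[x] modulo the ideal (d, x^m - 1),
   membership in which forces d to divide all m-multisections and which is closed under products.
   Y and Z are both congruent modulo p to u = 1 - x^(p^(\<alpha>-1)), and u^p is a multiple of p u modulo
   x^(p^\<alpha>) - 1; this gives Fleck's bound p^floor((N-1)/(p-1)) for Y^N and Z^N.  Lifting the
   Frobenius congruence gives Y = Z modulo p^(\<alpha>-\<beta>), so the binomial expansion of Y^n - Z^n gains
   the extra factor p^(\<alpha>-\<beta>-1).  For odd p the linear term gains another p^(\<alpha>-\<beta>-1) from the
   congruence C(p^k, p i) = C(p^(k-1), i) modulo p^(2k).  Finally, for r prime to p the
   multisections of Z^n with \<beta> = 1 vanish at r, so p^(\<gamma>-2) divides S_\<gamma>(n, r) itself. *)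

lemma add_div_le_div_add:
  fixes x y d :: nat
  assumes "0 < d"
  shows "(x + y) div d \<le> x div d + y"
proof -
  have "(x + y) div d \<le> (x + y * d) div d"
    using assms by (intro div_le_mono) simp
  thus ?thesis
    using assms by simp
qed

lemma power_diff_eq_sum:
  fixes y z :: "'a::comm_ring_1"
  shows "y ^ n - z ^ n = (\<Sum>j\<in>{1..n}. of_nat (n choose j) * (y - z) ^ j * z ^ (n - j))"
proof -
  have "y ^ n = (\<Sum>j\<le>n. of_nat (n choose j) * (y - z) ^ j * z ^ (n - j))"
    using binomial_ring[of "y - z" z n] by simp
  also have "{..n} = insert 0 {1..n}"
    by auto
  finally show ?thesis
    by simp
qed

section \<open>Binomial coefficients of prime powers\<close>

lemma fact_mult_choose:
  assumes "M \<le> N"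
  shows "fact M * (N choose M) = (\<Prod>j\<in>{1..M}. N - M + j)"
proof -
  have "fact M * (N choose M) * fact (N - M) = (fact N :: nat)"
    using binomial_fact_lemma[OF assms] by (simp add: ac_simps)
  hence "fact M * (N choose M) = fact N div (fact (N - M) :: nat)"
    by (metis fact_nonzero nonzero_mult_div_cancel_right)
  also have "\<dots> = \<Prod>{N - M + 1..N}"
    by (rule fact_div_fact) simp
  also have "\<dots> = (\<Prod>j\<in>{1..M}. j + (N - M))"
    using prod.shift_bounds_cl_nat_ivl[of "\<lambda>j. j" 1 "N - M" M] assms by simp
  finally show ?thesis
    by (simp add: add.commute)
qed

lemma multiples_in_atLeastAtMost:
  fixes p i :: nat
  assumes "0 < p"
  shows "{j\<in>{1..p * i}. p dvd j} = (*) p ` {1..i}"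
proof
  show "{j\<in>{1..p * i}. p dvd j} \<subseteq> (*) p ` {1..i}"
  proof
    fix j assume "j \<in> {j\<in>{1..p * i}. p dvd j}"
    then obtain l where "j = p * l" "1 \<le> p * l" "p * l \<le> p * i"
      by auto
    moreover from this have "l \<in> {1..i}"
      using assms by auto
    ultimately show "j \<in> (*) p ` {1..i}"
      by blast
  qed
qed (use assms in auto)

lemma card_nonmultiples:
  assumes "0 < p"
  shows "card {j\<in>{1..p * i}. \<not> p dvd j} = (p - 1) * i"
proof -
  have "card {j\<in>{1..p * i}. p dvd j} = i"
    unfolding multiples_in_atLeastAtMost[OF assms]
    by (subst card_image) (use assms in \<open>auto simp: inj_on_def\<close>)
  moreover have "card {j\<in>{1..p * i}. \<not> p dvd j} + card {j\<in>{1..p * i}. p dvd j}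
      = card ({j\<in>{1..p * i}. \<not> p dvd j} \<union> {j\<in>{1..p * i}. p dvd j})"
    by (rule card_Un_disjoint[symmetric]) auto
  moreover have "{j\<in>{1..p * i}. \<not> p dvd j} \<union> {j\<in>{1..p * i}. p dvd j} = {1..p * i}"
    by auto
  ultimately show ?thesis
    by (simp add: diff_mult_distrib)
qed

lemma fact_mult_choose_split:
  assumes "0 < p" "i \<le> N"
  shows "fact (p * i) * (p * N choose (p * i)) =
    (\<Prod>j | j \<in> {1..p * i} \<and> \<not> p dvd j. p * N - p * i + j) * p ^ i * fact i * (N choose i)"
proof -
  let ?f = "\<lambda>j. p * N - p * i + j"
  have "fact (p * i) * (p * N choose (p * i)) = prod ?f {1..p * i}"
    using assms by (intro fact_mult_choose) simp
  also have "{1..p * i} = {j\<in>{1..p * i}. \<not> p dvd j} \<union> {j\<in>{1..p * i}. p dvd j}"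
    by auto
  also have "prod ?f \<dots> = prod ?f {j\<in>{1..p * i}. \<not> p dvd j} * prod ?f {j\<in>{1..p * i}. p dvd j}"
    by (rule prod.union_disjoint) auto
  also have "{j\<in>{1..p * i}. p dvd j} = (*) p ` {1..i}"
    by (rule multiples_in_atLeastAtMost[OF assms(1)])
  also have "prod ?f ((*) p ` {1..i}) = (\<Prod>l\<in>{1..i}. p * (N - i + l))"
    using assms by (subst prod.reindex) (auto simp: inj_on_def algebra_simps diff_mult_distrib2
      intro!: prod.cong)
  also have "\<dots> = p ^ i * (fact i * (N choose i))"
    using assms by (simp add: prod.distrib fact_mult_choose)
  finally show ?thesis
    by (simp add: ac_simps)
qed

lemma choose_mult_prod_nonmultiples:
  assumes "0 < p" "i \<le> N"
  defines "R \<equiv> {j\<in>{1..p * i}. \<not> p dvd j}"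
  shows "(\<Prod>j\<in>R. int j) * int (p * N choose (p * i))
      = (\<Prod>j\<in>R. int (p * N) - int (p * i) + int j) * int (N choose i)"
proof -
  have "fact (p * i) = (\<Prod>j\<in>R. j) * p ^ i * fact i"
    using fact_mult_choose_split[OF assms(1) order_refl, of i] by (simp add: R_def)
  hence "(\<Prod>j\<in>R. j) * (p * N choose (p * i)) * (p ^ i * fact i)
      = (\<Prod>j\<in>R. p * N - p * i + j) * (N choose i) * (p ^ i * fact i)"
    using fact_mult_choose_split[OF assms(1,2)] by (simp add: R_def ac_simps)
  hence "int ((\<Prod>j\<in>R. j) * (p * N choose (p * i))) = int ((\<Prod>j\<in>R. p * N - p * i + j) * (N choose i))"
    using assms(1) by simp
  moreover have "p * i \<le> p * N"
    using assms(2) by simp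
  ultimately show ?thesis
    unfolding of_nat_mult of_nat_prod by (simp add: of_nat_diff)
qed

lemma prod_nonmultiples_reflect:
  fixes p i :: nat
  assumes "odd p"
  defines "R \<equiv> {j\<in>{1..p * i}. \<not> p dvd j}"
  shows "(\<Prod>j\<in>R. int j - int (p * i)) = (\<Prod>j\<in>R. int j)"
proof -
  have reflect: "p * i - j \<in> R \<and> p * i - (p * i - j) = j" if "j \<in> R" for j
  proof -
    from that have j: "1 \<le> j" "j \<le> p * i" "\<not> p dvd j"
      unfolding R_def by auto
    have "\<not> p dvd p * i - j"
    proof
      assume "p dvd p * i - j"
      hence "p dvd p * i - (p * i - j)"
        by simp
      thus False
        using j by simp
    qed
    moreover from j have "j \<noteq> p * i"
      by auto
    ultimately show ?thesis
      using j unfolding R_def by simp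
  qed
  have "(\<Prod>j\<in>R. int j - int (p * i)) = (\<Prod>j\<in>R. - int (p * i - j))"
    unfolding R_def by (intro prod.cong) auto
  also have "\<dots> = (-1) ^ card R * (\<Prod>j\<in>R. int (p * i - j))"
    by (rule prod_uminus)
  also have "card R = (p - 1) * i"
    using assms odd_pos unfolding R_def by (intro card_nonmultiples) blast
  also have "(\<Prod>j\<in>R. int (p * i - j)) = (\<Prod>j\<in>R. int j)"
    by (rule prod.reindex_bij_witness[of _ "\<lambda>j. p * i - j" "\<lambda>j. p * i - j"])
      (simp_all add: reflect)
  finally show ?thesis
    using assms by simp
qed

lemma poly_expansion_order_2:
  fixes P :: "'a::comm_ring_1 poly"
  obtains Q where "\<And>t. poly P t = poly P 0 + t * coeff P 1 + t\<^sup>2 * poly Q t"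
proof -
  obtain c0 c1 Q where "P = pCons c0 (pCons c1 Q)"
    by (metis pCons_cases)
  thus ?thesis
    by (intro that[of Q]) (simp add: power2_eq_square ring_distribs mult.assoc)
qed

lemma square_dvd_poly_diff_if_poly_eq:
  fixes P :: "'a::idom poly"
  assumes "poly P M = poly P 0" "M \<noteq> 0" "T dvd c * M"
  shows "T\<^sup>2 dvd c * (poly P T - poly P 0)"
proof -
  obtain Q where Q: "\<And>t. poly P t = poly P 0 + t * coeff P 1 + t\<^sup>2 * poly Q t"
    using poly_expansion_order_2[of P] by blast
  have "M * (coeff P 1 + M * poly Q M) = 0"
    using Q[of M] assms(1) by (simp add: power2_eq_square algebra_simps)
  hence "coeff P 1 = - M * poly Q M"
    using assms(2) by (simp add: add_eq_0_iff)
  moreover have "c * (poly P T - poly P 0) = c * (T * coeff P 1 + T\<^sup>2 * poly Q T)"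
    using Q[of T] by simp
  ultimately have "c * (poly P T - poly P 0) = - (T * (c * M) * poly Q M) + T\<^sup>2 * (c * poly Q T)"
    by (simp add: algebra_simps)
  moreover have "T\<^sup>2 dvd T * (c * M) * poly Q M"
    using assms(3) by (simp add: power2_eq_square mult_dvd_mono)
  ultimately show ?thesis
    by simp
qed

lemma prime_power_dvd_mult_choose:
  assumes "1 \<le> k"
  shows "p ^ k dvd p * i * (p ^ (k - 1) choose i)"
proof (cases "i = 0")
  case False
  have "p * i * (p ^ (k - 1) choose i) = p * p ^ (k - 1) * (p ^ (k - 1) - 1 choose (i - 1))"
    using times_binomial_minus1_eq[of i "p ^ (k - 1)"] False by (simp add: mult.assoc)
  also have "p * p ^ (k - 1) = p ^ k"
    using assms by (cases k) simp_all
  finally show ?thesis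
    by simp
qed simp

text \<open>With \<open>R\<close> the non-multiples of \<open>p\<close> in \<open>{1..p i}\<close> and \<open>P(t) = \<Prod>j\<in>R. (t - p i + j)\<close>,
  we have \<open>P(p i) C(p^k, p i) = P(p^k) C(p^(k-1), i)\<close>, and \<open>P(0) = P(p i)\<close> because
  \<open>j \<mapsto> p i - j\<close> permutes \<open>R\<close> and \<open>|R|\<close> is even. As \<open>p i C(p^(k-1), i)\<close> is a multiple of \<open>p^k\<close>,
  the Taylor expansion of \<open>P\<close> at \<open>0\<close> gives \<open>P(p i) (C(p^k, p i) - C(p^(k-1), i)) \<equiv> 0 mod p^(2k)\<close>.\<close>
lemma binomial_prime_power_mult_cong:
  assumes "prime p" "odd p" "1 \<le> k"
  shows "int p ^ (2 * k) dvd int (p ^ k choose (p * i)) - int (p ^ (k - 1) choose i)"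
proof (cases "i = 0 \<or> p ^ (k - 1) < i")
  case True
  have "p ^ k = p * p ^ (k - 1)"
    using assms(3) by (simp add: power_eq_if)
  hence "i = 0 \<or> p ^ k < p * i \<and> p ^ (k - 1) < i"
    using True prime_gt_0_nat[OF assms(1)] by auto
  thus ?thesis
    by (auto simp: binomial_eq_0)
next
  case False
  define N where "N = p ^ (k - 1)"
  define R where "R = {j\<in>{1..p * i}. \<not> p dvd j}"
  define P where "P = (\<Prod>j\<in>R. [:int j - int (p * i), 1:])"
  have p: "0 < p"
    using assms(1) prime_gt_0_nat by blast
  have pN: "p * N = p ^ k"
    using assms(3) unfolding N_def by (simp add: power_eq_if)
  have poly_P: "poly P t = (\<Prod>j\<in>R. t - int (p * i) + int j)" for t
    unfolding P_def by (simp add: poly_prod algebra_simps)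
  have iN: "i \<le> N"
    using False unfolding N_def by simp
  have "poly P (int (p * i)) * int (p * N choose (p * i)) = poly P (int (p * N)) * int (N choose i)"
    using choose_mult_prod_nonmultiples[OF p iN] unfolding poly_P R_def diff_self add_0 .
  hence choose_eq:
    "poly P (int (p * i)) * int (p ^ k choose (p * i)) = poly P (int p ^ k) * int (N choose i)"
    unfolding pN by simp
  have P_sym: "poly P 0 = poly P (int (p * i))"
    using prod_nonmultiples_reflect[OF assms(2), of i] unfolding poly_P R_def by simp
  have "int p ^ k dvd int (p * i * (N choose i))"
    unfolding N_def of_nat_power[symmetric] int_dvd_int_iff by (rule prime_power_dvd_mult_choose[OF assms(3)])
  hence "(int p ^ k)\<^sup>2 dvd int (N choose i) * (poly P (int p ^ k) - poly P 0)"
    using False p by (intro square_dvd_poly_diff_if_poly_eq[OF P_sym[symmetric]]) (simp_all add: ac_simps)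
  moreover have "poly P (int (p * i)) * (int (p ^ k choose (p * i)) - int (N choose i))
      = int (N choose i) * (poly P (int p ^ k) - poly P 0)"
    using choose_eq P_sym by (simp add: algebra_simps)
  ultimately have "int p ^ (2 * k) dvd poly P (int (p * i)) * (int (p ^ k choose (p * i)) - int (N choose i))"
    by (simp add: power_mult mult.commute)
  moreover have "coprime (int p ^ (2 * k)) (poly P (int (p * i)))"
    unfolding poly_P using assms(1)
    by (auto simp: R_def prime_imp_coprime intro!: prod_coprime_right)
  ultimately show ?thesis
    unfolding N_def by (simp add: coprime_dvd_mult_right_iff)
qed

lemma binomial_prime_power_cong:
  assumes "prime p" "odd p" "b \<le> K"
  shows "int p ^ (2 * (K - b) + 2) dvd int (p ^ K choose (p ^ b * i)) - int (p ^ (K - b) choose i)"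
  using assms(3)
proof (induction b arbitrary: K)
  case (Suc b)
  have "int p ^ (2 * (K - Suc b) + 2) dvd int p ^ (2 * K)"
    using Suc.prems by (intro le_imp_power_dvd) simp
  also have "int p ^ (2 * K) dvd
      int (p ^ K choose (p * (p ^ b * i))) - int (p ^ (K - 1) choose (p ^ b * i))"
    using Suc.prems by (intro binomial_prime_power_mult_cong assms(1,2)) simp
  finally have "int p ^ (2 * (K - Suc b) + 2) dvd
      int (p ^ K choose (p ^ Suc b * i)) - int (p ^ (K - 1) choose (p ^ b * i))"
    by (simp add: mult.assoc)
  moreover have "int p ^ (2 * (K - Suc b) + 2) dvd
      int (p ^ (K - 1) choose (p ^ b * i)) - int (p ^ (K - Suc b) choose i)"
    using Suc.IH[of "K - 1"] Suc.prems by simp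
  ultimately have "int p ^ (2 * (K - Suc b) + 2) dvd
      (int (p ^ K choose (p ^ Suc b * i)) - int (p ^ (K - 1) choose (p ^ b * i)))
      + (int (p ^ (K - 1) choose (p ^ b * i)) - int (p ^ (K - Suc b) choose i))"
    by (rule dvd_add)
  thus ?case
    by simp
qed simp

section \<open>Frobenius congruences\<close>

lemma prime_dvd_one_minus_power_binomial:
  fixes x :: "'a::comm_ring_1"
  assumes "prime p"
  shows "of_nat p * x dvd (1 - x) ^ p - 1 - (- x) ^ p"
proof -
  have p: "1 \<le> p"
    using assms prime_ge_1_nat by blast
  have "(1 - x) ^ p = (\<Sum>j\<le>p. of_nat (p choose j) * (- x) ^ j * 1 ^ (p - j))"
    using binomial_ring[of "- x" 1 p] by simp
  also have "{..p} = insert 0 (insert p {1..<p})"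
    using p by auto
  finally have "(1 - x) ^ p - 1 - (- x) ^ p = (\<Sum>j\<in>{1..<p}. of_nat (p choose j) * (- x) ^ j)"
    using p by simp
  also have "of_nat p * x dvd \<dots>"
  proof (rule dvd_sum)
    fix j assume j: "j \<in> {1..<p}"
    have "p dvd p choose j"
      using assms j by (intro dvd_choose_prime) auto
    then obtain d where "p choose j = p * d"
      by (elim dvdE)
    moreover have "(- x) ^ j = x * - ((- x) ^ (j - 1))"
      using j by (cases j) auto
    ultimately have "of_nat (p choose j) * (- x) ^ j = of_nat p * x * - (of_nat d * (- x) ^ (j - 1))"
      by (simp add: algebra_simps)
    thus "of_nat p * x dvd of_nat (p choose j) * (- x) ^ j"
      by (rule dvdI)
  qed
  finally show ?thesis .
qed

lemma prime_dvd_one_minus_power: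
  fixes x :: "'a::comm_ring_1"
  assumes "prime p"
  shows "of_nat p dvd (1 - x) ^ p - (1 - x ^ p)"
proof -
  have "of_nat p dvd (- x) ^ p + x ^ p"
  proof (cases "p = 2")
    case True
    hence "(- x) ^ p + x ^ p = of_nat p * x ^ p"
      by (simp only: of_nat_numeral power2_minus mult_2)
    thus ?thesis
      by simp
  next
    case False
    hence "odd p"
      using assms prime_ge_2_nat[OF assms] by (intro prime_odd_nat) auto
    thus ?thesis
      by simp
  qed
  moreover have "of_nat p dvd (1 - x) ^ p - 1 - (- x) ^ p"
    by (rule dvd_mult_left[OF prime_dvd_one_minus_power_binomial[OF assms]])
  ultimately have "of_nat p dvd ((1 - x) ^ p - 1 - (- x) ^ p) + ((- x) ^ p + x ^ p)"
    by (rule dvd_add[rotated])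
  thus ?thesis
    by (simp add: algebra_simps)
qed

lemma prime_dvd_one_minus_power_prime_power:
  fixes x :: "'a::comm_ring_1"
  assumes "prime p"
  shows "of_nat p dvd (1 - x) ^ (p ^ t) - (1 - x ^ (p ^ t))"
proof (induction t)
  case (Suc t)
  let ?A = "(1 - x) ^ (p ^ t)" and ?B = "1 - x ^ (p ^ t)"
  have "of_nat p dvd ?A ^ p - ?B ^ p"
    using Suc.IH by (rule dvd_trans) (simp add: power_diff_sumr2)
  moreover have "of_nat p dvd ?B ^ p - (1 - (x ^ (p ^ t)) ^ p)"
    by (rule prime_dvd_one_minus_power[OF assms])
  ultimately have "of_nat p dvd (?A ^ p - ?B ^ p) + (?B ^ p - (1 - (x ^ (p ^ t)) ^ p))"
    by (rule dvd_add)
  thus ?case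
    by (simp add: power_mult[symmetric] mult.commute)
      (simp add: algebra_simps)
qed simp

lemma of_nat_power_dvd_power_diff:
  fixes a b :: "'a::comm_ring_1"
  assumes "of_nat p ^ Suc t dvd a - b"
  shows "of_nat p ^ Suc (Suc t) dvd a ^ p - b ^ p"
proof -
  let ?P = "of_nat p :: 'a"
  obtain h where a: "a = ?P ^ Suc t * h + b"
    using assms unfolding dvd_def by (auto simp: algebra_simps)
  have "a ^ p = (\<Sum>j\<le>p. of_nat (p choose j) * (?P ^ Suc t * h) ^ j * b ^ (p - j))"
    unfolding a by (rule binomial_ring)
  also have "{..p} = insert 0 {1..p}"
    by auto
  finally have "a ^ p - b ^ p = (\<Sum>j\<in>{1..p}. of_nat (p choose j) * (?P ^ Suc t * h) ^ j * b ^ (p - j))"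
    by simp
  also have "?P ^ Suc (Suc t) dvd \<dots>"
  proof (rule dvd_sum)
    fix j assume j: "j \<in> {1..p}"
    show "?P ^ Suc (Suc t) dvd of_nat (p choose j) * (?P ^ Suc t * h) ^ j * b ^ (p - j)"
    proof (cases "j = 1")
      case True
      hence "of_nat (p choose j) * (?P ^ Suc t * h) ^ j * b ^ (p - j) = ?P ^ Suc (Suc t) * (h * b ^ (p - 1))"
        by (simp add: algebra_simps)
      thus ?thesis
        by simp
    next
      case False
      with j have "Suc (Suc t) \<le> Suc t * j"
        using mult_le_mono2[of 2 j "Suc t"] by simp
      hence "?P ^ Suc (Suc t) dvd ?P ^ (Suc t * j)"
        by (rule le_imp_power_dvd)
      also have "\<dots> dvd (?P ^ Suc t * h) ^ j"
        unfolding power_mult_distrib power_mult by simp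
      finally show ?thesis
        by (intro dvd_mult dvd_mult2)
    qed
  qed
  finally show ?thesis .
qed

lemma of_nat_power_dvd_power_prime_power_diff:
  fixes a b :: "'a::comm_ring_1"
  assumes "of_nat p dvd a - b"
  shows "of_nat p ^ Suc s dvd a ^ (p ^ s) - b ^ (p ^ s)"
proof (induction s)
  case (Suc s)
  hence "of_nat p ^ Suc (Suc s) dvd (a ^ (p ^ s)) ^ p - (b ^ (p ^ s)) ^ p"
    by (rule of_nat_power_dvd_power_diff)
  thus ?case
    by (simp add: power_mult[symmetric] mult.commute)
qed (use assms in simp)

section \<open>Multisections\<close>

definition multisection :: "nat \<Rightarrow> int poly \<Rightarrow> int \<Rightarrow> int" where
  "multisection m f s = (\<Sum>k\<le>degree f. if [int k = s] (mod int m) then coeff f k else 0)"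

lemma multisection_eq_sum:
  assumes "degree f \<le> B"
  shows "multisection m f s = (\<Sum>k\<le>B. if [int k = s] (mod int m) then coeff f k else 0)"
  unfolding multisection_def
  by (rule sum.mono_neutral_left) (use assms in \<open>auto simp: coeff_eq_0\<close>)

lemma multisection_eq_0:
  assumes "\<And>k. [int k = s] (mod int m) \<Longrightarrow> coeff f k = 0"
  shows "multisection m f s = 0"
  unfolding multisection_def using assms by (intro sum.neutral) auto

lemma multisection_cong:
  assumes "[s = s'] (mod int m)"
  shows "multisection m f s = multisection m f s'"
  unfolding multisection_def using assms cong_trans cong_sym by metis

lemma multisection_add: "multisection m (f + g) s = multisection m f s + multisection m g s"
proof -
  have "degree (f + g) \<le> max (degree f) (degree g)"
    by (rule degree_add_le) auto
  thus ?thesis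
    by (auto simp: multisection_eq_sum[of _ "max (degree f) (degree g)"] sum.distrib[symmetric]
        intro!: sum.cong)
qed

lemma multisection_minus: "multisection m (- f) s = - multisection m f s"
  unfolding multisection_def by (auto simp: sum_negf[symmetric] intro!: sum.cong)

lemma multisection_diff: "multisection m (f - g) s = multisection m f s - multisection m g s"
  using multisection_add[of m f "- g" s] by (simp add: multisection_minus)

lemma multisection_0 [simp]: "multisection m 0 s = 0"
  by (rule multisection_eq_0) simp

lemma multisection_sum: "multisection m (\<Sum>i\<in>A. f i) s = (\<Sum>i\<in>A. multisection m (f i) s)"
  by (induction A rule: infinite_finite_induct) (simp_all add: multisection_add)

lemma multisection_monom: "multisection m (monom c k) s = (if [int k = s] (mod int m) then c else 0)"
proof -
  have "multisection m (monom c k) s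
      = (\<Sum>j\<le>k. if [int j = s] (mod int m) then coeff (monom c k) j else 0)"
    by (rule multisection_eq_sum) (rule degree_monom_le)
  also have "\<dots> = (\<Sum>j\<in>{k}. if [int j = s] (mod int m) then coeff (monom c k) j else 0)"
    by (rule sum.mono_neutral_right) auto
  finally show ?thesis
    by simp
qed

lemma multisection_monom_mult: "multisection m (monom c a * g) s = c * multisection m g (s - int a)"
proof -
  have "monom c a * g = (\<Sum>b\<le>degree g. monom (c * coeff g b) (a + b))"
    by (subst (1) poly_as_sum_of_monoms[symmetric]) (simp add: sum_distrib_left mult_monom)
  hence "multisection m (monom c a * g) s
      = (\<Sum>b\<le>degree g. if [int (a + b) = s] (mod int m) then c * coeff g b else 0)"
    by (simp add: multisection_sum multisection_monom)
  also have "\<dots> = c * multisection m g (s - int a)"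
    unfolding multisection_def sum_distrib_left
    by (intro sum.cong) (auto simp: cong_iff_dvd_diff algebra_simps)
  finally show ?thesis .
qed

lemma multisection_smult: "multisection m (smult c g) s = c * multisection m g s"
  using multisection_monom_mult[of m c 0 g s] by (simp add: monom_0)

lemma multisection_cyclic_mult: "multisection m ((monom 1 m - 1) * g) s = 0"
proof -
  have "[s - int m = s] (mod int m)"
    by (simp add: cong_iff_dvd_diff)
  thus ?thesis
    using multisection_monom_mult[of m 1 m g s] multisection_smult[of m 1 g s]
    by (simp add: left_diff_distrib multisection_diff multisection_cong)
qed

lemma coeff_mult_eq_0_if_multiple:
  fixes f g :: "int poly"
  assumes "\<And>i. \<not> b dvd i \<Longrightarrow> coeff f i = 0" "\<And>i. b dvd i \<Longrightarrow> coeff g i = 0" "b dvd k"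
  shows "coeff (f * g) k = 0"
  unfolding coeff_mult
proof (intro sum.neutral ballI)
  fix i assume "i \<in> {..k}"
  hence "b dvd i \<Longrightarrow> b dvd k - i"
    using assms(3) by (simp add: dvd_diff_nat)
  thus "coeff f i * coeff g (k - i) = 0"
    using assms(1,2) by (cases "b dvd i") simp_all
qed

lemma multisection_mult_eq_0_if_multiple:
  assumes "\<And>i. \<not> b dvd i \<Longrightarrow> coeff f i = 0" "\<And>i. b dvd i \<Longrightarrow> coeff g i = 0"
    and "b dvd m" "int b dvd s"
  shows "multisection m (f * g) s = 0"
proof (rule multisection_eq_0)
  fix k assume "[int k = s] (mod int m)"
  hence "[int k = s] (mod int b)"
    by (rule cong_dvd_modulus) (use assms(3) in simp)
  hence "b dvd k"
    using assms(4) cong_dvd_iff int_dvd_int_iff by blast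
  thus "coeff (f * g) k = 0"
    using coeff_mult_eq_0_if_multiple[OF assms(1,2)] by blast
qed

lemma poly_decompose_coeff_dvd:
  fixes D :: "int poly"
  assumes "\<And>k. P k \<Longrightarrow> c dvd coeff D k"
  obtains A B where "D = smult c A + B" "\<And>k. P k \<Longrightarrow> coeff B k = 0"
proof -
  define A where "A = Abs_poly (\<lambda>k. if P k then coeff D k div c else 0)"
  have coeff_A: "coeff A = (\<lambda>k. if P k then coeff D k div c else 0)"
    unfolding A_def by (rule coeff_Abs_poly[of "degree D"]) (simp add: coeff_eq_0)
  show ?thesis
  proof (rule that[of A "D - smult c A"])
    fix k assume "P k"
    thus "coeff (D - smult c A) k = 0"
      using assms by (simp add: coeff_A)
  qed simp
qed

lemma const_poly_dvd_iff_smult: "[:c:] dvd f \<longleftrightarrow> (\<exists>a. f = smult c a)"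
  by (auto simp: dvd_def)

text \<open>\<open>cyclic_dvd d m f\<close>: \<open>f\<close> vanishes in \<open>(\<int>/d)[x]/(x^m - 1)\<close>. This forces \<open>d\<close> to divide every
  \<open>m\<close>-multisection of \<open>f\<close> and, unlike that property, is evidently closed under products.\<close>
definition cyclic_dvd :: "int \<Rightarrow> nat \<Rightarrow> int poly \<Rightarrow> bool" where
  "cyclic_dvd d m f \<longleftrightarrow> (\<exists>g h. f = (monom 1 m - 1) * g + smult d h)"

lemma dvd_multisection_if_cyclic_dvd:
  assumes "cyclic_dvd d m f"
  shows "d dvd multisection m f s"
  using assms
  by (auto simp: cyclic_dvd_def multisection_add multisection_cyclic_mult multisection_smult)

lemma cyclic_dvd_1 [simp]: "cyclic_dvd 1 m f"
  unfolding cyclic_dvd_def by (rule exI[of _ 0]) simp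

lemma cyclic_dvd_smult: "cyclic_dvd d m (smult d h)"
  unfolding cyclic_dvd_def by (intro exI[of _ 0] exI[of _ h]) simp

lemma cyclic_dvd_if_const_dvd: "[:d:] dvd f \<Longrightarrow> cyclic_dvd d m f"
  by (auto simp: cyclic_dvd_smult)

lemma cyclic_dvd_cyclic_mult: "cyclic_dvd d m ((monom 1 m - 1) * g)"
  unfolding cyclic_dvd_def by (rule exI[of _ g]) simp

lemma cyclic_dvd_add:
  assumes "cyclic_dvd d m f" "cyclic_dvd d m g"
  shows "cyclic_dvd d m (f + g)"
proof -
  obtain f1 f2 g1 g2 where f: "f = (monom 1 m - 1) * f1 + smult d f2"
    and g: "g = (monom 1 m - 1) * g1 + smult d g2"
    using assms unfolding cyclic_dvd_def by blast
  have "f + g = (monom 1 m - 1) * (f1 + g1) + smult d (f2 + g2)"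
    unfolding f g by (simp add: algebra_simps smult_add_right smult_diff_right)
  thus ?thesis
    unfolding cyclic_dvd_def by blast
qed

lemma cyclic_dvd_mult:
  assumes "cyclic_dvd a m f" "cyclic_dvd b m g"
  shows "cyclic_dvd (a * b) m (f * g)"
proof -
  obtain f1 f2 g1 g2 where f: "f = (monom 1 m - 1) * f1 + smult a f2"
    and g: "g = (monom 1 m - 1) * g1 + smult b g2"
    using assms unfolding cyclic_dvd_def by blast
  have "f * g = (monom 1 m - 1) * (f1 * g + smult a (f2 * g1)) + smult (a * b) (f2 * g2)"
    unfolding f g by (simp add: algebra_simps smult_add_right smult_diff_right)
  thus ?thesis
    unfolding cyclic_dvd_def by blast
qed

lemma cyclic_dvd_mult_left: "cyclic_dvd d m g \<Longrightarrow> cyclic_dvd d m (f * g)"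
  using cyclic_dvd_mult[of 1 m f d g] by simp

lemma cyclic_dvd_minus: "cyclic_dvd d m f \<Longrightarrow> cyclic_dvd d m (- f)"
  using cyclic_dvd_mult_left[of d m f "- 1"] by simp

lemma cyclic_dvd_diff: "cyclic_dvd d m f \<Longrightarrow> cyclic_dvd d m g \<Longrightarrow> cyclic_dvd d m (f - g)"
  using cyclic_dvd_add[of d m f "- g"] cyclic_dvd_minus[of d m g] by simp

lemma cyclic_dvd_sum: "(\<And>i. i \<in> A \<Longrightarrow> cyclic_dvd d m (f i)) \<Longrightarrow> cyclic_dvd d m (\<Sum>i\<in>A. f i)"
  by (induction A rule: infinite_finite_induct)
    (auto intro: cyclic_dvd_add cyclic_dvd_if_const_dvd[of _ 0])

lemma cyclic_dvd_dvd_trans: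
  assumes "d' dvd d" "cyclic_dvd d m f"
  shows "cyclic_dvd d' m f"
proof -
  obtain g h where "f = (monom 1 m - 1) * g + smult d h"
    using assms(2) unfolding cyclic_dvd_def by blast
  moreover obtain e where "d = d' * e"
    using assms(1) by blast
  ultimately have "f = (monom 1 m - 1) * g + smult d' (smult e h)"
    by simp
  thus ?thesis
    unfolding cyclic_dvd_def by blast
qed

lemma cyclic_dvd_power_mono:
  fixes p :: int
  shows "c \<le> c' \<Longrightarrow> cyclic_dvd (p ^ c') m f \<Longrightarrow> cyclic_dvd (p ^ c) m f"
  by (rule cyclic_dvd_dvd_trans[OF le_imp_power_dvd])

section \<open>Fleck's bound\<close>

text \<open>Since \<open>(1 - u)^p = x^(p q) \<equiv> 1\<close>, the binomial theorem makes \<open>u^p\<close> a multiple of \<open>p u\<close>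
  modulo \<open>x^(p q) - 1\<close>.\<close>
lemma cyclic_dvd_one_minus_monom_step:
  assumes "prime p" "cyclic_dvd (int p ^ c) (p * q) ((1 - monom 1 q) * g)"
  shows "cyclic_dvd (int p ^ Suc c) (p * q) ((1 - monom 1 q) ^ p * g)"
proof -
  define u :: "int poly" where "u = 1 - monom 1 q"
  obtain h where h: "(1 - u) ^ p - 1 - (- u) ^ p = of_nat p * u * h"
    using prime_dvd_one_minus_power_binomial[OF assms(1), of u] by (elim dvdE)
  have "(1 - u) ^ p = monom 1 (p * q)"
    by (simp add: u_def monom_power mult.commute)
  with h have neg: "(- u) ^ p = (monom 1 (p * q) - 1) - smult (int p) (u * h)"
    by (simp add: of_nat_poly algebra_simps)
  have "u ^ p * g = (-1) ^ p * ((- u) ^ p * g)"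
    by (simp add: power_mult_distrib[symmetric])
  also have "\<dots> = (-1) ^ p * ((monom 1 (p * q) - 1) * g - h * smult (int p) (u * g))"
    unfolding neg by (simp add: algebra_simps)
  finally have "u ^ p * g = \<dots>" .
  moreover have "cyclic_dvd (int p ^ Suc c) (p * q) (smult (int p) (u * g))"
    using cyclic_dvd_mult[OF cyclic_dvd_smult[of "int p" _ 1] assms(2)] by (simp add: u_def)
  ultimately show ?thesis
    unfolding u_def
    by (metis cyclic_dvd_cyclic_mult cyclic_dvd_diff cyclic_dvd_mult_left)
qed

lemma cyclic_dvd_one_minus_monom_power_mult:
  assumes "prime p"
  shows "cyclic_dvd (int p ^ t) (p * q) ((1 - monom 1 q) ^ (1 + (p - 1) * t) * g)"
proof (induction t arbitrary: g)
  case (Suc t)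
  have "p + (p - 1) * t = 1 + (p - 1) * Suc t"
    using prime_ge_1_nat[OF assms] by (cases p) auto
  hence "(1 - monom 1 q) ^ (1 + (p - 1) * Suc t) * g
      = (1 - monom 1 q) ^ p * ((1 - monom 1 q) ^ ((p - 1) * t) * g)"
    by (metis power_add mult.assoc)
  moreover have "cyclic_dvd (int p ^ Suc t) (p * q)
      ((1 - monom 1 q) ^ p * ((1 - monom 1 q) ^ ((p - 1) * t) * g))"
    by (rule cyclic_dvd_one_minus_monom_step[OF assms]) (use Suc.IH in \<open>simp add: mult.assoc\<close>)
  ultimately show ?case
    by (simp only:)
qed simp

lemma cyclic_dvd_one_minus_monom_power:
  assumes "prime p"
  shows "cyclic_dvd (int p ^ ((b - 1) div (p - 1))) (p * q) ((1 - monom 1 q) ^ b)"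
proof (cases "b = 0")
  case False
  define t where "t = (b - 1) div (p - 1)"
  have "b = 1 + (p - 1) * t + (b - 1) mod (p - 1)"
    using False unfolding t_def by simp
  hence "(1 - monom 1 q) ^ b = (1 - monom 1 q) ^ (1 + (p - 1) * t) * (1 - monom 1 q :: int poly) ^ ((b - 1) mod (p - 1))"
    by (metis power_add)
  thus ?thesis
    unfolding t_def[symmetric] by (simp only: cyclic_dvd_one_minus_monom_power_mult[OF assms])
qed simp

lemma cyclic_dvd_fleck:
  assumes "prime p" "[:int p:] dvd Z - (1 - monom 1 q)"
  shows "cyclic_dvd (int p ^ ((N - 1) div (p - 1))) (p * q) (Z ^ N)"
proof -
  obtain a where Z: "Z = (1 - monom 1 q) + smult (int p) a"
    using assms(2) by (auto simp: const_poly_dvd_iff_smult algebra_simps)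
  have p: "0 < p - 1"
    using prime_ge_2_nat[OF assms(1)] by simp
  have "Z ^ N = (\<Sum>b\<le>N. of_nat (N choose b) * ((1 - monom 1 q) ^ b * smult (int p) a ^ (N - b)))"
    unfolding Z binomial_ring by (simp add: mult.assoc)
  also have "cyclic_dvd (int p ^ ((N - 1) div (p - 1))) (p * q) \<dots>"
  proof (rule cyclic_dvd_sum, rule cyclic_dvd_mult_left)
    fix b assume "b \<in> {..N}"
    hence "(N - 1) div (p - 1) \<le> (b - 1 + (N - b)) div (p - 1)"
      by (intro div_le_mono) auto
    also have "\<dots> \<le> (b - 1) div (p - 1) + (N - b)"
      by (rule add_div_le_div_add[OF p])
    finally have le: "(N - 1) div (p - 1) \<le> (b - 1) div (p - 1) + (N - b)" .
    have "cyclic_dvd (int p ^ ((b - 1) div (p - 1) + (N - b))) (p * q)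
        ((1 - monom 1 q) ^ b * smult (int p) a ^ (N - b))"
      unfolding power_add smult_power
      by (rule cyclic_dvd_mult[OF cyclic_dvd_one_minus_monom_power[OF assms(1)] cyclic_dvd_smult])
    thus "cyclic_dvd (int p ^ ((N - 1) div (p - 1))) (p * q) ((1 - monom 1 q) ^ b * smult (int p) a ^ (N - b))"
      by (rule cyclic_dvd_power_mono[OF le])
  qed
  finally show ?thesis .
qed

lemma cyclic_dvd_fleck_pred_smult:
  assumes "prime p" "[:int p:] dvd z - (1 - monom 1 q)" "1 \<le> n"
  shows "cyclic_dvd (int p ^ ((n - 1) div (p - 1) + c - 1)) (p * q) (z ^ (n - 1) * smult (int p ^ c) a)"
proof -
  have "0 < p - 1"
    using prime_ge_2_nat[OF assms(1)] by simp
  have "(n - 1) div (p - 1) \<le> (n - 1 - 1 + 1) div (p - 1)"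
    by (intro div_le_mono) linarith
  also have "\<dots> \<le> (n - 1 - 1) div (p - 1) + 1"
    using \<open>0 < p - 1\<close> by (rule add_div_le_div_add)
  finally have "(n - 1) div (p - 1) + c - 1 \<le> (n - 1 - 1) div (p - 1) + c"
    by linarith
  moreover have "cyclic_dvd (int p ^ ((n - 1 - 1) div (p - 1) + c)) (p * q) (z ^ (n - 1) * smult (int p ^ c) a)"
    unfolding power_add by (rule cyclic_dvd_mult[OF cyclic_dvd_fleck[OF assms(1,2)] cyclic_dvd_smult])
  ultimately show ?thesis
    by (rule cyclic_dvd_power_mono)
qed

section \<open>Powers of 1 - x^e\<close>

lemma one_minus_monom_power_eq_sum:
  "(1 - monom 1 e) ^ N = (\<Sum>i\<le>N. monom ((-1) ^ i * int (N choose i)) (e * i) :: int poly)"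
proof -
  have "(1 - monom 1 e) ^ N = (\<Sum>i\<le>N. of_nat (N choose i) * (- monom 1 e) ^ i * 1 ^ (N - i) :: int poly)"
    using binomial_ring[of "- monom 1 e" 1 N] by simp
  also have "\<dots> = (\<Sum>i\<le>N. monom ((-1) ^ i * int (N choose i)) (e * i))"
    by (intro sum.cong) (simp_all add: minus_monom monom_power of_nat_monom mult_monom mult.commute)
  finally show ?thesis .
qed

lemma multisection_one_minus_monom_power:
  "multisection m ((1 - monom 1 e) ^ N) s
     = (\<Sum>i\<le>N. if [int (e * i) = s] (mod int m) then (-1) ^ i * int (N choose i) else 0)"
  unfolding one_minus_monom_power_eq_sum by (simp add: multisection_sum multisection_monom)

lemma coeff_one_minus_monom_power:
  assumes "0 < e"
  shows "coeff ((1 - monom 1 e) ^ N :: int poly) k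
     = (if e dvd k then (-1) ^ (k div e) * int (N choose (k div e)) else 0)"
proof -
  have "coeff ((1 - monom 1 e) ^ N :: int poly) k
      = (\<Sum>i\<le>N. if i = k div e \<and> e dvd k then (-1) ^ i * int (N choose i) else 0)"
    unfolding one_minus_monom_power_eq_sum coeff_sum coeff_monom
    using assms by (intro sum.cong) auto
  also have "\<dots> = (if e dvd k then (-1) ^ (k div e) * int (N choose (k div e)) else 0)"
    by (auto simp: sum.delta' binomial_eq_0)
  finally show ?thesis .
qed

lemma one_minus_monom_power_prime_power_cong:
  assumes "prime p"
  shows "[:int p:] ^ Suc s dvd (1 - monom 1 e) ^ (p ^ (t + s)) - (1 - monom 1 (e * p ^ t)) ^ (p ^ s)"
proof -
  have "of_nat p dvd (1 - monom 1 e) ^ (p ^ t) - (1 - monom 1 (e * p ^ t) :: int poly)"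
    using prime_dvd_one_minus_power_prime_power[OF assms, of "monom 1 e" t] by (simp add: monom_power)
  hence "of_nat p ^ Suc s dvd ((1 - monom 1 e) ^ (p ^ t)) ^ (p ^ s) - (1 - monom 1 (e * p ^ t) :: int poly) ^ (p ^ s)"
    by (rule of_nat_power_dvd_power_prime_power_diff)
  thus ?thesis
    by (simp add: of_nat_poly power_add power_mult)
qed

lemma one_minus_monom_power_shift_cong:
  assumes "prime p" "\<beta> < \<alpha>"
  shows "[:int p:] ^ (\<alpha> - \<beta>) dvd
      (1 - monom 1 1) ^ (p ^ (\<alpha> - 1)) - (1 - monom 1 (p ^ \<beta>)) ^ (p ^ (\<alpha> - \<beta> - 1))"
    and "[:int p:] dvd (1 - monom 1 (p ^ \<beta>)) ^ (p ^ (\<alpha> - \<beta> - 1)) - (1 - monom 1 (p ^ (\<alpha> - 1)))"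
proof -
  show "[:int p:] ^ (\<alpha> - \<beta>) dvd
      (1 - monom 1 1) ^ (p ^ (\<alpha> - 1)) - (1 - monom 1 (p ^ \<beta>)) ^ (p ^ (\<alpha> - \<beta> - 1))"
    using one_minus_monom_power_prime_power_cong[OF assms(1), of "\<alpha> - \<beta> - 1" 1 \<beta>] assms(2)
    by (simp add: Suc_diff_Suc)
  show "[:int p:] dvd (1 - monom 1 (p ^ \<beta>)) ^ (p ^ (\<alpha> - \<beta> - 1)) - (1 - monom 1 (p ^ (\<alpha> - 1)))"
    using one_minus_monom_power_prime_power_cong[OF assms(1), of 0 "p ^ \<beta>" "\<alpha> - \<beta> - 1"] assms(2)
    by (simp add: power_add[symmetric])
qed

lemma coeff_one_minus_monom_power_shift_diff:
  assumes "prime p" "odd p" "\<beta> \<le> K" "p ^ \<beta> dvd k"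
  shows "int p ^ (2 * (K - \<beta>) + 2) dvd
      coeff ((1 - monom 1 1) ^ (p ^ K) - (1 - monom 1 (p ^ \<beta>)) ^ (p ^ (K - \<beta>))) k"
proof -
  obtain i where k: "k = p ^ \<beta> * i"
    using assms(4) by blast
  have "odd (p ^ \<beta>)"
    using assms(2) by simp
  hence "(-1::int) ^ k = (-1) ^ i"
    unfolding k by (simp add: power_mult)
  hence "coeff ((1 - monom 1 1) ^ (p ^ K) - (1 - monom 1 (p ^ \<beta>)) ^ (p ^ (K - \<beta>))) k
      = (-1) ^ i * (int (p ^ K choose (p ^ \<beta> * i)) - int (p ^ (K - \<beta>) choose i))"
    using prime_gt_0_nat[OF assms(1)] by (simp add: coeff_one_minus_monom_power k algebra_simps)
  thus ?thesis
    using binomial_prime_power_cong[OF assms(1-3), of i] by simp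
qed

lemma one_minus_monom_power_shift_decompose:
  assumes "prime p" "odd p" "\<beta> < \<alpha>"
  obtains A B
  where "(1 - monom 1 1) ^ (p ^ (\<alpha> - 1)) - (1 - monom 1 (p ^ \<beta>)) ^ (p ^ (\<alpha> - \<beta> - 1))
      = smult (int p ^ (2 * (\<alpha> - \<beta>))) A + B"
    and "\<And>k. p ^ \<beta> dvd k \<Longrightarrow> coeff B k = 0"
proof -
  have "int p ^ (2 * (\<alpha> - \<beta>)) dvd
      coeff ((1 - monom 1 1) ^ (p ^ (\<alpha> - 1)) - (1 - monom 1 (p ^ \<beta>)) ^ (p ^ (\<alpha> - \<beta> - 1))) k"
    if "p ^ \<beta> dvd k" for k
    using coeff_one_minus_monom_power_shift_diff[OF assms(1,2), of \<beta> "\<alpha> - 1" k] assms(3) that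
    by (simp add: Suc_diff_Suc numeral_2_eq_2)
  thus ?thesis
    using poly_decompose_coeff_dvd that by blast
qed

lemma cyclic_dvd_power_diff_tail:
  assumes "prime p" "[:int p:] ^ k dvd y - z" "[:int p:] dvd z - (1 - monom 1 q)" "1 \<le> k" "1 \<le> c"
  shows "cyclic_dvd (int p ^ ((n - 1) div (p - 1) + (k - 1) * c)) (p * q)
      (\<Sum>j\<in>{c..n}. of_nat (n choose j) * (y - z) ^ j * z ^ (n - j))"
proof (intro cyclic_dvd_sum)
  fix j assume j: "j \<in> {c..n}"
  have p: "0 < p - 1"
    using prime_ge_2_nat[OF assms(1)] by simp
  have "(n - 1) div (p - 1) \<le> (n - j - 1 + j) div (p - 1)"
    by (intro div_le_mono) linarith
  also have "\<dots> \<le> (n - j - 1) div (p - 1) + j"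
    by (rule add_div_le_div_add[OF p])
  finally have "(n - 1) div (p - 1) \<le> (n - j - 1) div (p - 1) + j" .
  moreover have "(k - 1) * c \<le> (k - 1) * j"
    using j by (intro mult_le_mono2) simp
  moreover have "k * j = (k - 1) * j + j"
    using assms(4) by (cases k) simp_all
  ultimately have le: "(n - 1) div (p - 1) + (k - 1) * c \<le> k * j + (n - j - 1) div (p - 1)"
    by linarith
  have "[:int p:] ^ (k * j) dvd (y - z) ^ j"
    using assms(2) by (simp add: power_mult power_mult_distrib dvd_power_same)
  hence "cyclic_dvd (int p ^ (k * j)) (p * q) ((y - z) ^ j)"
    by (intro cyclic_dvd_if_const_dvd) (simp add: poly_const_pow)
  hence "cyclic_dvd (int p ^ (k * j + (n - j - 1) div (p - 1))) (p * q) ((y - z) ^ j * z ^ (n - j))"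
    unfolding power_add by (rule cyclic_dvd_mult[OF _ cyclic_dvd_fleck[OF assms(1,3)]])
  hence "cyclic_dvd (int p ^ ((n - 1) div (p - 1) + (k - 1) * c)) (p * q) ((y - z) ^ j * z ^ (n - j))"
    by (rule cyclic_dvd_power_mono[OF le])
  thus "cyclic_dvd (int p ^ ((n - 1) div (p - 1) + (k - 1) * c)) (p * q)
      (of_nat (n choose j) * (y - z) ^ j * z ^ (n - j))"
    by (simp add: mult.assoc cyclic_dvd_mult_left)
qed

lemma cyclic_dvd_shift_power_diff:
  assumes "prime p" "\<beta> < \<alpha>"
  defines "Y \<equiv> (1 - monom 1 1) ^ (p ^ (\<alpha> - 1))" and "Z \<equiv> (1 - monom 1 (p ^ \<beta>)) ^ (p ^ (\<alpha> - \<beta> - 1))"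
  shows "cyclic_dvd (int p ^ ((n - 1) div (p - 1) + (\<alpha> - \<beta> - 1))) (p ^ \<alpha>) (Y ^ n - Z ^ n)"
proof -
  have "p * p ^ (\<alpha> - 1) = p ^ \<alpha>"
    using assms(2) by (cases \<alpha>) simp_all
  thus ?thesis
    using cyclic_dvd_power_diff_tail[OF assms(1) one_minus_monom_power_shift_cong[OF assms(1,2)], of 1 n]
      assms(2) unfolding Y_def Z_def power_diff_eq_sum by simp
qed

text \<open>For odd \<open>p\<close> the term \<open>n Z^(n-1) (Y - Z)\<close> of the binomial expansion of \<open>Y^n - Z^n\<close> needs
  care: \<open>Z^(n-1)\<close> has only exponents divisible by \<open>p^\<beta>\<close>, and there the coefficients of \<open>Y - Z\<close>
  are divisible by \<open>p^(2(\<alpha>-\<beta>))\<close>; the other coefficients of \<open>Y - Z\<close> do not reach the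
  multisections at multiples of \<open>p^\<beta>\<close>.\<close>
lemma multisection_shift_power_diff_odd:
  assumes "prime p" "odd p" "\<beta> < \<alpha>" "int p ^ \<beta> dvd s"
  defines "Y \<equiv> (1 - monom 1 1) ^ (p ^ (\<alpha> - 1))" and "Z \<equiv> (1 - monom 1 (p ^ \<beta>)) ^ (p ^ (\<alpha> - \<beta> - 1))"
  shows "int p ^ ((n - 1) div (p - 1) + 2 * (\<alpha> - \<beta> - 1)) dvd multisection (p ^ \<alpha>) (Y ^ n - Z ^ n) s"
proof (cases "n = 0")
  case False
  define e where "e = (n - 1) div (p - 1) + 2 * (\<alpha> - \<beta> - 1)"
  define c where "c = 2 * (\<alpha> - \<beta>)"
  define tail where "tail = (\<Sum>j\<in>{2..n}. of_nat (n choose j) * (Y - Z) ^ j * Z ^ (n - j))"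
  have m: "p * p ^ (\<alpha> - 1) = p ^ \<alpha>"
    using assms(3) by (cases \<alpha>) simp_all
  note cong = one_minus_monom_power_shift_cong[OF assms(1,3), folded Y_def Z_def]
  obtain A B where AB: "Y - Z = smult (int p ^ c) A + B" and B: "\<And>k. p ^ \<beta> dvd k \<Longrightarrow> coeff B k = 0"
    using one_minus_monom_power_shift_decompose[OF assms(1-3)] unfolding Y_def Z_def c_def by blast
  have "{1..n} = insert 1 {2..n}"
    using False by auto
  hence split: "Y ^ n - Z ^ n
      = (of_nat n * (Z ^ (n - 1) * smult (int p ^ c) A) + tail) + smult (int n) (Z ^ (n - 1) * B)"
    unfolding power_diff_eq_sum tail_def AB by (simp add: algebra_simps of_nat_poly smult_add_right)
  have "cyclic_dvd (int p ^ e) (p ^ \<alpha>) (of_nat n * (Z ^ (n - 1) * smult (int p ^ c) A) + tail)"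
  proof (rule cyclic_dvd_add)
    show "cyclic_dvd (int p ^ e) (p ^ \<alpha>) (of_nat n * (Z ^ (n - 1) * smult (int p ^ c) A))"
    proof (rule cyclic_dvd_mult_left)
      have "e \<le> (n - 1) div (p - 1) + c - 1"
        unfolding e_def c_def using assms(3) by linarith
      moreover have "cyclic_dvd (int p ^ ((n - 1) div (p - 1) + c - 1)) (p ^ \<alpha>) (Z ^ (n - 1) * smult (int p ^ c) A)"
        using cyclic_dvd_fleck_pred_smult[OF assms(1) cong(2), of n c A] False unfolding m by simp
      ultimately show "cyclic_dvd (int p ^ e) (p ^ \<alpha>) (Z ^ (n - 1) * smult (int p ^ c) A)"
        by (rule cyclic_dvd_power_mono)
    qed
    show "cyclic_dvd (int p ^ e) (p ^ \<alpha>) tail"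
      using cyclic_dvd_power_diff_tail[OF assms(1) cong, of 2 n] assms(3)
      unfolding e_def tail_def m by (simp add: mult.commute)
  qed
  moreover have "multisection (p ^ \<alpha>) (Z ^ (n - 1) * B) s = 0"
  proof (rule multisection_mult_eq_0_if_multiple[OF _ B])
    show "coeff (Z ^ (n - 1)) i = 0" if "\<not> p ^ \<beta> dvd i" for i
      using that prime_gt_0_nat[OF assms(1)]
      by (simp add: Z_def power_mult[symmetric] coeff_one_minus_monom_power)
  qed (use assms(3,4) in \<open>simp_all add: le_imp_power_dvd\<close>)
  ultimately show ?thesis
    unfolding e_def split multisection_add[of _ "_ + _"] multisection_smult
    by (simp add: dvd_multisection_if_cyclic_dvd)
qed simp

section \<open>The normalised sums\<close>

lemma S_sum_eq_multisection:
  "S_sum p \<gamma> n s = multisection (p ^ \<gamma>) ((1 - monom 1 1) ^ (p ^ (\<gamma> - 1) * n)) s"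
proof -
  let ?N = "p ^ (\<gamma> - 1) * n"
  have "S_sum p \<gamma> n s = (\<Sum>k\<in>{k\<in>{..?N}. [int k = s] (mod int (p ^ \<gamma>))}. (-1) ^ k * int (?N choose k))"
    unfolding S_sum_def by (intro sum.cong) auto
  also have "\<dots> = (\<Sum>k\<le>?N. if [int k = s] (mod int (p ^ \<gamma>)) then (-1) ^ k * int (?N choose k) else 0)"
    by (rule sum.inter_filter) simp
  finally show ?thesis
    unfolding multisection_one_minus_monom_power by simp
qed

lemma S_sum_eq_multisection_shift:
  assumes "\<beta> \<le> \<alpha>" "0 < p"
  shows "S_sum p (\<alpha> - \<beta>) n r
     = multisection (p ^ \<alpha>) ((1 - monom 1 (p ^ \<beta>)) ^ (p ^ (\<alpha> - \<beta> - 1) * n)) (int p ^ \<beta> * r)"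
proof -
  have "[int (p ^ \<beta> * i) = int p ^ \<beta> * r] (mod int (p ^ \<alpha>)) \<longleftrightarrow> [int i = r] (mod int (p ^ (\<alpha> - \<beta>)))"
    for i
  proof -
    have "int (p ^ \<alpha>) = int p ^ \<beta> * int p ^ (\<alpha> - \<beta>)"
      using assms(1) by (simp add: power_add[symmetric])
    moreover have "int (p ^ \<beta> * i) - int p ^ \<beta> * r = int p ^ \<beta> * (int i - r)"
      by (simp add: algebra_simps)
    ultimately show ?thesis
      unfolding cong_iff_dvd_diff using assms(2) by simp
  qed
  thus ?thesis
    unfolding S_sum_eq_multisection multisection_one_minus_monom_power by simp
qed

lemma S_sum_fleck:
  assumes "prime p" "1 \<le> \<gamma>"
  shows "int p ^ ((n - 1) div (p - 1)) dvd S_sum p \<gamma> n s"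
proof -
  have "[:int p:] dvd (1 - monom 1 1) ^ (p ^ (\<gamma> - 1)) - (1 - monom 1 (p ^ (\<gamma> - 1)))"
    using one_minus_monom_power_prime_power_cong[OF assms(1), of 0 1 "\<gamma> - 1"] by simp
  hence "cyclic_dvd (int p ^ ((n - 1) div (p - 1))) (p * p ^ (\<gamma> - 1)) (((1 - monom 1 1) ^ (p ^ (\<gamma> - 1))) ^ n)"
    by (rule cyclic_dvd_fleck[OF assms(1)])
  moreover have "p * p ^ (\<gamma> - 1) = p ^ \<gamma>"
    using assms(2) by (simp add: power_eq_if)
  ultimately show ?thesis
    unfolding S_sum_eq_multisection by (simp add: power_mult dvd_multisection_if_cyclic_dvd)
qed

lemma S_exp_eq:
  assumes "prime p" "1 \<le> n"
  shows "S_exp p n = int ((n - 1) div (p - 1))"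
  using assms prime_ge_1_nat[OF assms(1)] by (simp add: S_exp_def of_nat_diff zdiv_int)

lemma S_at_0:
  assumes "prime p"
  shows "S p \<gamma> 0 s = int p * S_sum p \<gamma> 0 s"
proof -
  have "S_exp p 0 = -1"
    using prime_ge_2_nat[OF assms] by (simp add: S_exp_def div_eq_minus1)
  thus ?thesis
    by (simp add: S_def)
qed

lemma S_sum_eq_mult_S:
  assumes "prime p" "1 \<le> \<gamma>" "1 \<le> n"
  shows "S_sum p \<gamma> n s = int p ^ ((n - 1) div (p - 1)) * S p \<gamma> n s"
  using S_sum_fleck[OF assms(1,2), of n s] by (simp add: S_def S_exp_eq[OF assms(1,3)])

lemma power_dvd_S:
  assumes "prime p" "1 \<le> \<gamma>" "int p ^ ((n - 1) div (p - 1) + d) dvd S_sum p \<gamma> n s"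
  shows "int p ^ d dvd S p \<gamma> n s"
proof (cases "n = 0")
  case True
  thus ?thesis
    using assms(3) by (simp add: S_at_0[OF assms(1)])
next
  case False
  thus ?thesis
    using assms(3) prime_gt_0_nat[OF assms(1)]
    by (simp add: S_sum_eq_mult_S[OF assms(1,2)] power_add)
qed

lemma power_dvd_S_diff:
  assumes "prime p" "1 \<le> \<gamma>" "1 \<le> \<gamma>'"
    and "int p ^ ((n - 1) div (p - 1) + d) dvd S_sum p \<gamma> n s - S_sum p \<gamma>' n s'"
  shows "int p ^ d dvd S p \<gamma> n s - S p \<gamma>' n s'"
proof (cases "n = 0")
  case True
  thus ?thesis
    using assms(4) by (simp add: S_at_0[OF assms(1)] right_diff_distrib[symmetric])
next
  case False
  thus ?thesis
    using assms(4) prime_gt_0_nat[OF assms(1)]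
    by (simp add: S_sum_eq_mult_S[OF assms(1,2)] S_sum_eq_mult_S[OF assms(1,3)] power_add
        right_diff_distrib[symmetric])
qed

lemma S_sum_shift_cong:
  assumes "prime p" "\<beta> < \<alpha>"
  shows "int p ^ ((n - 1) div (p - 1) + (2 - (if p = 2 then 1 else 0)) * (\<alpha> - \<beta> - 1)) dvd
      S_sum p \<alpha> n (int p ^ \<beta> * r) - S_sum p (\<alpha> - \<beta>) n r"
proof -
  define Y Z where "Y = (1 - monom 1 1 :: int poly) ^ (p ^ (\<alpha> - 1))"
    and "Z = (1 - monom 1 (p ^ \<beta>) :: int poly) ^ (p ^ (\<alpha> - \<beta> - 1))"
  have "S_sum p \<alpha> n (int p ^ \<beta> * r) - S_sum p (\<alpha> - \<beta>) n r
      = multisection (p ^ \<alpha>) (Y ^ n - Z ^ n) (int p ^ \<beta> * r)"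
    using S_sum_eq_multisection_shift[of \<beta> \<alpha> p n r] assms prime_gt_0_nat[OF assms(1)]
    by (simp add: S_sum_eq_multisection multisection_diff Y_def Z_def power_mult)
  moreover have "int p ^ ((n - 1) div (p - 1) + (2 - (if p = 2 then 1 else 0)) * (\<alpha> - \<beta> - 1))
      dvd multisection (p ^ \<alpha>) (Y ^ n - Z ^ n) (int p ^ \<beta> * r)"
  proof (cases "p = 2")
    case True
    thus ?thesis
      using cyclic_dvd_shift_power_diff[OF assms, of n, folded Y_def Z_def]
      by (simp add: dvd_multisection_if_cyclic_dvd)
  next
    case False
    hence "odd p"
      using prime_ge_2_nat[OF assms(1)] by (intro prime_odd_nat assms(1)) auto
    thus ?thesis
      using multisection_shift_power_diff_odd[OF assms(1) _ assms(2), of "int p ^ \<beta> * r" n]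
      by (simp add: False Y_def Z_def)
  qed
  ultimately show ?thesis
    by simp
qed

lemma power_dvd_S_if_not_cong_0:
  assumes "prime p" "\<not> [r = 0] (mod int p)"
  shows "int p ^ (\<gamma> - 2) dvd S p \<gamma> n r"
proof (cases "2 \<le> \<gamma>")
  case True
  define Y Z where "Y = (1 - monom 1 1 :: int poly) ^ (p ^ (\<gamma> - 1))"
    and "Z = (1 - monom 1 (p ^ 1) :: int poly) ^ (p ^ (\<gamma> - 1 - 1))"
  have "multisection (p ^ \<gamma>) (Z ^ n) r = 0"
  proof (rule multisection_eq_0)
    fix k assume "[int k = r] (mod int (p ^ \<gamma>))"
    hence k: "[int k = r] (mod int p)"
      by (rule cong_dvd_modulus) (use True in \<open>simp add: dvd_power\<close>)
    have "\<not> p dvd k"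
    proof
      assume "p dvd k"
      hence "[int k = 0] (mod int p)"
        by (simp add: cong_0_iff)
      thus False
        using assms(2) k by (metis cong_sym cong_trans)
    qed
    thus "coeff (Z ^ n) k = 0"
      using prime_gt_0_nat[OF assms(1)] by (simp add: Z_def power_mult[symmetric] coeff_one_minus_monom_power)
  qed
  hence "S_sum p \<gamma> n r = multisection (p ^ \<gamma>) (Y ^ n - Z ^ n) r"
    by (simp add: S_sum_eq_multisection multisection_diff Y_def power_mult)
  moreover have "cyclic_dvd (int p ^ ((n - 1) div (p - 1) + (\<gamma> - 2))) (p ^ \<gamma>) (Y ^ n - Z ^ n)"
    using cyclic_dvd_shift_power_diff[OF assms(1), of 1 \<gamma> n] True
    by (simp add: Y_def Z_def numeral_2_eq_2)
  ultimately have "int p ^ ((n - 1) div (p - 1) + (\<gamma> - 2)) dvd S_sum p \<gamma> n r"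
    by (simp add: dvd_multisection_if_cyclic_dvd)
  thus ?thesis
    using True by (intro power_dvd_S[OF assms(1)]) simp_all
qed simp

lemma S_shift_cong:
  assumes "prime p" "\<beta> < \<alpha>"
  shows "[S p \<alpha> n (int p ^ \<beta> * r) = S p (\<alpha> - \<beta>) n r]
      (mod (int p ^ ((2 - (if p = 2 then 1 else 0)) * (\<alpha> - \<beta> - 1))))"
  unfolding cong_iff_dvd_diff using assms by (intro power_dvd_S_diff S_sum_shift_cong) auto

lemma power_dvd_S_shift:
  assumes "prime p" "\<beta> < \<alpha>" "\<not> [r = 0] (mod int p)"
  shows "int p ^ (\<alpha> - \<beta> - 2) dvd S p \<alpha> n (int p ^ \<beta> * r)"
proof -
  have "int p ^ (\<alpha> - \<beta> - 2) dvd S p \<alpha> n (int p ^ \<beta> * r) - S p (\<alpha> - \<beta>) n r"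
    using S_shift_cong[OF assms(1,2)] unfolding cong_iff_dvd_diff
    by (rule dvd_trans[rotated]) (simp add: le_imp_power_dvd)
  moreover have "int p ^ (\<alpha> - \<beta> - 2) dvd S p (\<alpha> - \<beta>) n r"
    by (rule power_dvd_S_if_not_cong_0[OF assms(1,3)])
  ultimately have "int p ^ (\<alpha> - \<beta> - 2) dvd
      (S p \<alpha> n (int p ^ \<beta> * r) - S p (\<alpha> - \<beta>) n r) + S p (\<alpha> - \<beta>) n r"
    by (rule dvd_add)
  thus ?thesis
    by simp
qed

theorem corollary3p1:
  fixes p \<alpha> \<beta> n :: nat and r :: int
  assumes "prime p" and "\<alpha> > \<beta>"
  shows "[S p \<alpha> n (int p ^ \<beta> * r) = S p (\<alpha> - \<beta>) n r]
           (mod (int p ^ ((2 - (if p = 2 then 1 else 0)) * (\<alpha> - \<beta> - 1))))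
       \<and> (\<not> [r = 0] (mod int p) \<longrightarrow>
            S p \<alpha> n (int p ^ \<beta> * r) = 0 \<or>
            int (multiplicity (int p) (S p \<alpha> n (int p ^ \<beta> * r))) \<ge> int \<alpha> - int \<beta> - 2)"
proof (intro conjI impI)
  show "[S p \<alpha> n (int p ^ \<beta> * r) = S p (\<alpha> - \<beta>) n r]
      (mod (int p ^ ((2 - (if p = 2 then 1 else 0)) * (\<alpha> - \<beta> - 1))))"
    by (rule S_shift_cong[OF assms])
  assume "\<not> [r = 0] (mod int p)"
  hence "int p ^ (\<alpha> - \<beta> - 2) dvd S p \<alpha> n (int p ^ \<beta> * r)"
    by (rule power_dvd_S_shift[OF assms])
  moreover have "\<not> is_unit (int p)"
    using prime_ge_2_nat[OF assms(1)] by simp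
  ultimately have "S p \<alpha> n (int p ^ \<beta> * r) \<noteq> 0 \<Longrightarrow>
      \<alpha> - \<beta> - 2 \<le> multiplicity (int p) (S p \<alpha> n (int p ^ \<beta> * r))"
    by (intro multiplicity_geI) simp_all
  thus "S p \<alpha> n (int p ^ \<beta> * r) = 0 \<or>
      int (multiplicity (int p) (S p \<alpha> n (int p ^ \<beta> * r))) \<ge> int \<alpha> - int \<beta> - 2"
    by linarith
qed

end
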